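(* Let $L>0,\alpha>0$. For any $b\in\Lambda(\alpha)$ and $\lambda>0$, $-\alpha\ge\mu(\lambda,b)\ge-\alpha-\alpha^2L^2$.
   Context: $\Lambda(\alpha)$: $b\in C^1(\mathbb R)$, $b\ge0$, $L$-periodic, $\int_0^Lb=\alpha L$. $\mu(\lambda,b)$ denotes the principal eigenvalue of $-\psi''+2\lambda\psi'-b\psi=\mu\psi$, i.e. the eigenvalue admitting a positive $L$-periodic eigenfunction $\psi$. *)

theory Defs
  imports "HOL-Analysis.Analysis"
begin

definition C1_fun :: "(real \<Rightarrow> real) \<Rightarrow> bool" where
  "C1_fun f \<longleftrightarrow> (\<exists>f'. (\<forall>x. (f has_real_derivative f' x) (at x)) \<and> continuous_on UNIV f')"

definition C2_with :: "(real \<Rightarrow> real) \<Rightarrow> (real \<Rightarrow> real) \<Rightarrow> (real \<Rightarrow> real) \<Rightarrow> bool" where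
  "C2_with f f' f'' \<longleftrightarrow> (\<forall>x. (f has_real_derivative f' x) (at x)) \<and>
      (\<forall>x. (f' has_real_derivative f'' x) (at x)) \<and> continuous_on UNIV f''"

definition periodic_fun :: "real \<Rightarrow> (real \<Rightarrow> real) \<Rightarrow> bool" where
  "periodic_fun L f \<longleftrightarrow> (\<forall>x. f (x + L) = f x)"

definition Lambda :: "real \<Rightarrow> real \<Rightarrow> (real \<Rightarrow> real) set" where
  "Lambda L \<alpha> = {b. C1_fun b \<and> (\<forall>x. b x \<ge> 0) \<and> periodic_fun L b \<and>
      integral {0..L} b = \<alpha> * L}"

definition is_principal_eigenvalue :: "real \<Rightarrow> real \<Rightarrow> (real \<Rightarrow> real) \<Rightarrow> real \<Rightarrow> bool" where
  "is_principal_eigenvalue L lam b \<mu> \<longleftrightarrow>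
     (\<exists>\<psi> \<psi>' \<psi>''. C2_with \<psi> \<psi>' \<psi>'' \<and> (\<forall>x. \<psi> x > 0) \<and> periodic_fun L \<psi> \<and>
        (\<forall>x. - \<psi>'' x + 2 * lam * \<psi>' x - b x * \<psi> x = \<mu> * \<psi> x))"

end

theory Submission
  imports Defs
begin

text \<open>The logarithmic derivative \<open>w = \<psi>'/\<psi>\<close> of the eigenfunction is periodic and solves the
  Riccati equation \<open>w' = 2\<lambda>w - b - \<mu> - w\<^sup>2\<close>. Integrating it over a period kills \<open>w'\<close> and \<open>w\<close>
  (the latter being \<open>(ln \<psi>)'\<close>), so \<open>\<mu> L = -\<alpha> L - \<integral>\<^sub>0\<^sup>L w\<^sup>2\<close>, which gives the upper bound.
  For the lower bound, Fermat's rule at the extrema of \<open>w\<close> shows \<open>(w - \<lambda>)\<^sup>2 \<le> \<lambda>\<^sup>2 - \<mu>\<close>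
  everywhere, hence \<open>w' \<ge> -b\<close>, so \<open>w + \<integral>b\<close> is nondecreasing. Since \<open>w\<close> vanishes at a
  maximum of \<open>\<psi>\<close> and \<open>w(0) = w(L)\<close>, this traps \<open>w\<close> in \<open>[-\<alpha>L, \<alpha>L]\<close> on a period.\<close>

lemma periodic_fun_add_int_mult:
  assumes "periodic_fun L f"
  shows "f (x + real_of_int k * L) = f x"
proof -
  have nat_shift: "f (x + real n * L) = f x \<and> f (x - real n * L) = f x" for x n
  proof (induction n arbitrary: x)
    case (Suc n)
    have "\<And>u. f (u + L) = f u" using assms unfolding periodic_fun_def by blast
    from this[of "x + real n * L"] this[of "x - real (Suc n) * L"] Suc[of x]
    show ?case by (simp add: algebra_simps)
  qed simp
  show ?thesis
  proof (cases "k \<ge> 0")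
    case True
    then show ?thesis using nat_shift[of x "nat k"] by simp
  next
    case False
    then show ?thesis using nat_shift[of x "nat (- k)"] by simp
  qed
qed

lemma periodic_fun_range:
  assumes "periodic_fun L f" "L > 0"
  shows "range f = f ` {0..L}"
proof
  show "range f \<subseteq> f ` {0..L}"
  proof
    fix y assume "y \<in> range f"
    then obtain x where y: "y = f x" by blast
    define k where "k = \<lfloor>x / L\<rfloor>"
    have "real_of_int k \<le> x / L" "x / L < real_of_int k + 1" unfolding k_def by linarith+
    then have "real_of_int k * L \<le> x" "x < (real_of_int k + 1) * L"
      using assms(2) by (simp_all add: field_simps)
    then have "x + real_of_int (- k) * L \<in> {0..L}" by (auto simp: algebra_simps)
    moreover have "y = f (x + real_of_int (- k) * L)"
      using y periodic_fun_add_int_mult[OF assms(1), of x "- k"] by simp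
    ultimately show "y \<in> f ` {0..L}" by blast
  qed
qed blast

lemma periodic_fun_attains_max:
  assumes "periodic_fun L f" "L > 0" "continuous_on UNIV f"
  obtains xmax where "\<And>y. f y \<le> f xmax"
proof -
  have "compact (f ` {0..L})" "f ` {0..L} \<noteq> {}"
    using assms(2,3) by (auto intro: compact_continuous_image continuous_on_subset)
  then obtain u where "u \<in> range f" "\<forall>y\<in>range f. y \<le> u"
    using compact_attains_sup unfolding periodic_fun_range[OF assms(1,2)] by metis
  then show ?thesis using that by blast
qed

lemma periodic_fun_attains_min:
  assumes "periodic_fun L f" "L > 0" "continuous_on UNIV f"
  obtains xmin where "\<And>y. f xmin \<le> f y"
proof -
  have "periodic_fun L (\<lambda>x. - f x)" "continuous_on UNIV (\<lambda>x. - f x)"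
    using assms(1,3) by (auto simp: periodic_fun_def intro: continuous_intros)
  from periodic_fun_attains_max[OF this(1) assms(2) this(2)] that show ?thesis by force
qed

lemma periodic_fun_deriv:
  assumes "periodic_fun L f" "\<And>x. (f has_real_derivative f' x) (at x)"
  shows "periodic_fun L f'"
  unfolding periodic_fun_def
proof
  fix x
  have "((\<lambda>x. x + L) has_real_derivative 1) (at x)" by (auto intro!: derivative_eq_intros)
  from DERIV_chain2[OF assms(2) this]
  have "((\<lambda>x. f (x + L)) has_real_derivative f' (x + L)) (at x)" by simp
  moreover have "(\<lambda>x. f (x + L)) = f" using assms(1) unfolding periodic_fun_def by auto
  ultimately show "f' (x + L) = f' x" using assms(2) DERIV_unique by metis
qed

lemma periodic_fun_deriv_has_integral_0:
  assumes "periodic_fun L f" "L \<ge> 0" "\<And>x. (f has_real_derivative f' x) (at x)"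
  shows "(f' has_integral 0) {0..L}"
proof -
  have "(f' has_integral (f L - f 0)) {0..L}"
    using assms(2,3) by (intro fundamental_theorem_of_calculus)
      (auto simp: has_real_derivative_iff_has_vector_derivative[symmetric] has_field_derivative_at_within)
  moreover have "f L = f 0" using assms(1) unfolding periodic_fun_def by (metis add_0)
  ultimately show ?thesis by simp
qed

lemma logarithmic_derivative_riccati:
  fixes \<psi> \<psi>' \<psi>'' b :: "real \<Rightarrow> real"
  assumes "C2_with \<psi> \<psi>' \<psi>''" "\<psi> x > 0"
    and "- \<psi>'' x + 2 * lam * \<psi>' x - b x * \<psi> x = \<mu> * \<psi> x"
  shows "((\<lambda>x. \<psi>' x / \<psi> x) has_real_derivative
           2 * lam * (\<psi>' x / \<psi> x) - b x - \<mu> - (\<psi>' x / \<psi> x)\<^sup>2) (at x)"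
proof -
  have "((\<lambda>x. \<psi>' x / \<psi> x) has_real_derivative
          (\<psi>'' x * \<psi> x - \<psi>' x * \<psi>' x) / (\<psi> x * \<psi> x)) (at x)"
    using assms(1,2) unfolding C2_with_def by (auto intro!: DERIV_divide)
  moreover have "(\<psi>'' x * \<psi> x - \<psi>' x * \<psi>' x) / (\<psi> x * \<psi> x)
      = 2 * lam * (\<psi>' x / \<psi> x) - b x - \<mu> - (\<psi>' x / \<psi> x)\<^sup>2"
  proof -
    have \<psi>'': "\<psi>'' x = 2 * lam * \<psi>' x - b x * \<psi> x - \<mu> * \<psi> x" using assms(3) by linarith
    show ?thesis using assms(2) by (simp add: \<psi>'' field_simps power2_eq_square)
  qed
  ultimately show ?thesis by simp
qed

lemma riccati_periodic_bound:
  fixes w b :: "real \<Rightarrow> real"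
  assumes "periodic_fun L w" "L > 0" "\<And>x. b x \<ge> 0"
    and deriv: "\<And>x. (w has_real_derivative 2 * lam * w x - b x - \<mu> - (w x)\<^sup>2) (at x)"
  shows "(w x - lam)\<^sup>2 \<le> lam\<^sup>2 - \<mu>"
proof -
  have "continuous_on UNIV w"
    using deriv by (metis DERIV_isCont continuous_at_imp_continuous_on)
  then obtain xmax xmin where max: "\<And>y. w y \<le> w xmax" and min: "\<And>y. w xmin \<le> w y"
    using periodic_fun_attains_max[OF assms(1,2)] periodic_fun_attains_min[OF assms(1,2)] by metis
  have "2 * lam * w xmax - b xmax - \<mu> - (w xmax)\<^sup>2 = 0"
    using DERIV_local_max[OF deriv zero_less_one] max by blast
  then have "(w xmax - lam)\<^sup>2 \<le> lam\<^sup>2 - \<mu>"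
    using assms(3)[of xmax] by (simp add: power2_eq_square algebra_simps)
  moreover have "2 * lam * w xmin - b xmin - \<mu> - (w xmin)\<^sup>2 = 0"
    using DERIV_local_min[OF deriv zero_less_one] min by blast
  then have "(w xmin - lam)\<^sup>2 \<le> lam\<^sup>2 - \<mu>"
    using assms(3)[of xmin] by (simp add: power2_eq_square algebra_simps)
  moreover have "w xmin \<le> w x" "w x \<le> w xmax" using max min by auto
  \<comment> \<open>a convex function on \<open>[w xmin, w xmax]\<close> is bounded by its values at the endpoints\<close>
  ultimately show ?thesis
    by (smt (verit) power_mono power2_commute)
qed

lemma mono_on_add_integral_of_deriv_ge:
  fixes w w' b :: "real \<Rightarrow> real"
  assumes "\<And>x. (w has_real_derivative w' x) (at x)" "\<And>x. w' x \<ge> - b x"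
    and "continuous_on UNIV b"
  shows "mono_on {a..c} (\<lambda>x. w x + integral {a..x} b)"
proof (rule mono_onI)
  fix s t assume st: "s \<in> {a..c}" "t \<in> {a..c}" "s \<le> t"
  have cont_b: "continuous_on {a..c} b" using assms(3) continuous_on_subset by blast
  show "w s + integral {a..s} b \<le> w t + integral {a..t} b"
  proof (rule DERIV_nonneg_imp_increasing_open[OF st(3)])
    fix x assume x: "s < x" "x < t"
    have "((\<lambda>x. integral {a..x} b) has_vector_derivative b x) (at x within {a..c})"
      using integral_has_vector_derivative[OF cont_b] st x by auto
    moreover have "at x within {a..c} = at x" using st x by (intro at_within_interior) auto
    ultimately have "((\<lambda>x. integral {a..x} b) has_real_derivative b x) (at x)"
      by (simp add: has_real_derivative_iff_has_vector_derivative)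
    then have "((\<lambda>x. w x + integral {a..x} b) has_real_derivative w' x + b x) (at x)"
      by (rule DERIV_add[OF assms(1)])
    then show "\<exists>y. ((\<lambda>x. w x + integral {a..x} b) has_real_derivative y) (at x) \<and> y \<ge> 0"
      using assms(2)[of x] by force
  next
    have "continuous_on UNIV w"
      using assms(1) by (metis DERIV_isCont continuous_at_imp_continuous_on)
    moreover have "continuous_on {a..c} (\<lambda>x. integral {a..x} b)"
      using cont_b by (intro indefinite_integral_continuous_1 integrable_continuous_interval)
    ultimately show "continuous_on {s..t} (\<lambda>x. w x + integral {a..x} b)"
      using st by (auto intro!: continuous_on_add elim!: continuous_on_subset)
  qed
qed

lemma abs_le_of_mono_on_add:
  fixes w B :: "real \<Rightarrow> real"
  assumes "mono_on {a..c} B" "mono_on {a..c} (\<lambda>x. w x + B x)" "w a = w c"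
    and "z \<in> {a..c}" "w z = 0" "x \<in> {a..c}"
  shows "\<bar>w x\<bar> \<le> B c - B a"
proof -
  have incr: "w s + B s \<le> w t + B t" "B s \<le> B t" if "s \<in> {a..c}" "t \<in> {a..c}" "s \<le> t" for s t
    using mono_onD[OF assms(2)] mono_onD[OF assms(1)] that by auto
  show ?thesis
  proof (cases "z \<le> x")
    case True
    then show ?thesis using incr[of z x] incr[of x c] incr[of a z] assms(3-6) by auto
  next
    case False
    then show ?thesis using incr[of x z] incr[of z c] incr[of a x] assms(3-6) by auto
  qed
qed

lemma abs_le_integral_of_deriv_ge:
  fixes w w' b :: "real \<Rightarrow> real"
  assumes "\<And>x. (w has_real_derivative w' x) (at x)" "\<And>x. w' x \<ge> - b x"
    and "continuous_on UNIV b" "\<And>x. b x \<ge> 0"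
    and "w a = w c" "z \<in> {a..c}" "w z = 0" "x \<in> {a..c}"
  shows "\<bar>w x\<bar> \<le> integral {a..c} b"
proof -
  have "mono_on {a..c} (\<lambda>x. integral {a..x} b)"
  proof (rule mono_onI)
    fix s t assume "s \<in> {a..c}" "t \<in> {a..c}" "s \<le> t"
    then show "integral {a..s} b \<le> integral {a..t} b"
      using assms(3,4) by (intro integral_subset_le integrable_continuous_interval)
        (auto elim: continuous_on_subset)
  qed
  from abs_le_of_mono_on_add[OF this mono_on_add_integral_of_deriv_ge[OF assms(1-3)] assms(5-8)]
  show ?thesis by simp
qed

lemma riccati_periodic_abs_le:
  fixes w b :: "real \<Rightarrow> real"
  assumes "periodic_fun L w" "L > 0" "\<And>x. b x \<ge> 0" "continuous_on UNIV b"
    and deriv: "\<And>x. (w has_real_derivative 2 * lam * w x - b x - \<mu> - (w x)\<^sup>2) (at x)"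
    and "0 \<in> w ` {0..L}" "x \<in> {0..L}"
  shows "\<bar>w x\<bar> \<le> integral {0..L} b"
proof -
  have deriv_ge: "2 * lam * w x - b x - \<mu> - (w x)\<^sup>2 \<ge> - b x" for x
    using riccati_periodic_bound[OF assms(1-3) deriv, of x] by (simp add: power2_eq_square algebra_simps)
  have "w 0 = w L" using assms(1) unfolding periodic_fun_def by (metis add_0)
  moreover obtain z where "z \<in> {0..L}" "w z = 0" using assms(6) by auto
  ultimately show ?thesis
    by (rule abs_le_integral_of_deriv_ge[OF deriv deriv_ge assms(4,3) _ _ _ assms(7)])
qed

lemma riccati_period_integral:
  fixes w b :: "real \<Rightarrow> real"
  assumes "periodic_fun L w" "L \<ge> 0"
    and "\<And>x. (w has_real_derivative 2 * lam * w x - b x - \<mu> - (w x)\<^sup>2) (at x)"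
    and "(w has_integral 0) {0..L}" "(b has_integral B) {0..L}"
  shows "((\<lambda>x. (w x)\<^sup>2) has_integral - B - \<mu> * L) {0..L}"
proof -
  have "((\<lambda>x. 2 * lam * w x - b x - \<mu>) has_integral 2 * lam * 0 - B - L * \<mu>) {0..L}"
    using assms(2,4,5) has_integral_const_real[of \<mu> 0 L]
    by (intro has_integral_diff has_integral_mult_right) auto
  from has_integral_diff[OF this periodic_fun_deriv_has_integral_0[OF assms(1-3)]]
  show ?thesis by (simp add: algebra_simps)
qed

lemma principal_eigenfunction_log_deriv:
  assumes "is_principal_eigenvalue L lam b \<mu>" "L > 0"
  obtains w where "periodic_fun L w"
    "\<And>x. (w has_real_derivative 2 * lam * w x - b x - \<mu> - (w x)\<^sup>2) (at x)"
    "(w has_integral 0) {0..L}" "0 \<in> w ` {0..L}"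
proof -
  from assms(1) obtain \<psi> \<psi>' \<psi>'' where C2: "C2_with \<psi> \<psi>' \<psi>''" and \<psi>_pos: "\<And>x. \<psi> x > 0"
    and \<psi>_per: "periodic_fun L \<psi>" and eq: "\<And>x. - \<psi>'' x + 2 * lam * \<psi>' x - b x * \<psi> x = \<mu> * \<psi> x"
    unfolding is_principal_eigenvalue_def by blast
  have \<psi>': "\<And>x. (\<psi> has_real_derivative \<psi>' x) (at x)" using C2 unfolding C2_with_def by blast
  define w where "w = (\<lambda>x. \<psi>' x / \<psi> x)"
  have w_per: "periodic_fun L w"
    using \<psi>_per periodic_fun_deriv[OF \<psi>_per \<psi>'] unfolding periodic_fun_def w_def by simp
  have "\<And>x. (w has_real_derivative 2 * lam * w x - b x - \<mu> - (w x)\<^sup>2) (at x)"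
    unfolding w_def by (rule logarithmic_derivative_riccati[OF C2 \<psi>_pos eq])
  moreover have "\<And>x. ((\<lambda>x. ln (\<psi> x)) has_real_derivative w x) (at x)"
    unfolding w_def using \<psi>_pos by (auto intro!: derivative_eq_intros \<psi>')
  then have "(w has_integral 0) {0..L}"
    using \<psi>_per assms(2) by (intro periodic_fun_deriv_has_integral_0[of L "\<lambda>x. ln (\<psi> x)"])
      (auto simp: periodic_fun_def)
  moreover have "continuous_on UNIV \<psi>"
    using \<psi>' by (metis DERIV_isCont continuous_at_imp_continuous_on)
  then obtain x0 where "\<And>y. \<psi> y \<le> \<psi> x0"
    using periodic_fun_attains_max[OF \<psi>_per assms(2)] by blast
  then have "w x0 = 0" using DERIV_local_max[OF \<psi>' zero_less_one] by (simp add: w_def)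
  then have "0 \<in> w ` {0..L}" using periodic_fun_range[OF w_per assms(2)] by (metis rangeI)
  ultimately show ?thesis using that w_per by blast
qed

theorem mainTheorem16:
  fixes L \<alpha> lam \<mu> :: real and b :: "real \<Rightarrow> real"
  assumes "L > 0" and "\<alpha> > 0"
    and "b \<in> Lambda L \<alpha>" and "lam > 0"
    and "is_principal_eigenvalue L lam b \<mu>"
  shows "- \<alpha> \<ge> \<mu> \<and> \<mu> \<ge> - \<alpha> - \<alpha>\<^sup>2 * L\<^sup>2"
proof -
  from assms(3) obtain b' where b': "\<And>x. (b has_real_derivative b' x) (at x)"
    and b_nonneg: "\<And>x. b x \<ge> 0" and b_int: "integral {0..L} b = \<alpha> * L"
    unfolding Lambda_def C1_fun_def by blast
  have b_cont: "continuous_on UNIV b"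
    using b' by (metis DERIV_isCont continuous_at_imp_continuous_on)
  then have "(b has_integral \<alpha> * L) {0..L}"
    using b_int by (metis has_integral_integral integrable_continuous_interval continuous_on_subset top_greatest)
  obtain w where w_per: "periodic_fun L w"
    and w': "\<And>x. (w has_real_derivative 2 * lam * w x - b x - \<mu> - (w x)\<^sup>2) (at x)"
    and "(w has_integral 0) {0..L}" and w_zero: "0 \<in> w ` {0..L}"
    using principal_eigenfunction_log_deriv[OF assms(5,1)] by blast
  then have w2: "((\<lambda>x. (w x)\<^sup>2) has_integral - \<alpha> * L - \<mu> * L) {0..L}"
    using riccati_period_integral[OF w_per _ w'] \<open>(b has_integral \<alpha> * L) {0..L}\<close> assms(1) by simp
  have "0 \<le> - \<alpha> * L - \<mu> * L" by (rule has_integral_nonneg[OF w2]) simp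
  then have upper: "\<mu> \<le> - \<alpha>" using mult_right_le_imp_le[of \<mu> L "- \<alpha>"] assms(1) by simp
  have "(w x)\<^sup>2 \<le> (\<alpha> * L)\<^sup>2" if "x \<in> {0..L}" for x
    using riccati_periodic_abs_le[OF w_per assms(1) b_nonneg b_cont w' w_zero that] b_int
      power_mono[of "\<bar>w x\<bar>" "\<alpha> * L" 2] by simp
  then have "- \<alpha> * L - \<mu> * L \<le> L * (\<alpha> * L)\<^sup>2"
    using has_integral_le[OF w2 has_integral_const_real[of "(\<alpha> * L)\<^sup>2" 0 L]] assms(1) by simp
  then have "(- \<alpha> - \<alpha>\<^sup>2 * L\<^sup>2) * L \<le> \<mu> * L" by (simp add: algebra_simps power2_eq_square)
  with upper assms(1) show ?thesis by simp
qed

end
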